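(* Let $f:[0,1]\to[0,\infty)$ be continuous and non-decreasing with $f(u)>0$ for $u\in(0,1]$, let $0<\delta<1$, let $r$ be a positive integer, and fix $x>0$ and $y\in\mathbb{R}$. Then the functions $\mathbf{h}\mapsto\psi_{com}(\mathbf{h})$, $\mathbf{h}\mapsto\psi_{int}(\mathbf{h},y)$ and $\mathbf{h}\mapsto\psi_{ext}(\mathbf{h},x)$ defined in the context are concave on $[0,1-\delta]^r$.
   Context: Notation: $H(t)=-t\log t-(1-t)\log(1-t)$ (natural log); $\operatorname{erf}(x)=\frac2{\sqrt\pi}\int_0^xe^{-t^2}dt$; $\Phi$ the standard normal distribution function; $\lambda(u)=\frac{u^2}2+\log(2\Phi(u))$; $f_i=f\big(\delta+\frac{(i-1)(1-\delta)}{r}\big)$. For $\mathbf{h}\in[0,1-\delta]^r$: $\psi_{com}(\mathbf{h})=\frac{1-\delta}{r}\sum_{i=1}^rH\big(\frac{h_i}{1-\delta}\big)+\big(r\sum_ih_i-\delta\big)\log2$; $c_1=\int_0^\delta f^2(u)du$, $\bar c_0=\frac1r\sum_if_ih_i$, $\bar\lambda_0(s)=\frac{1}{r\bar c_0}\sum_ih_i\lambda(sf_i)$, $\bar\lambda_0^*(y)=\sup_{s\in\mathbb{R}}(sy-\bar\lambda_0(s))$, with $\bar c_0\bar\lambda_0^*(y)$ understood as $\sup_s(\bar c_0sy-\frac1r\sum_ih_i\lambda(sf_i))$; $\psi_{int}(\mathbf{h},y)=-\big(r\sum_ih_i-\delta\big)\log2-\Big(\frac{\bar c_0^2}{2c_1}y^2+\bar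 c_0\bar\lambda_0^*(y)\Big)$; $\bar c_2=\int_0^\delta f^2(u)du+\frac1r\sum_if_i^2h_i$, $\bar G_0(x)=\int_\delta^1\log\operatorname{erf}(xf(u))du-\frac1r\sum_ih_i\log\operatorname{erf}(xf_i)$, $\psi_{ext}(\mathbf{h},x)=-(\bar c_2x^2-\bar G_0(x))$. *)

theory Defs
  imports "HOL-Analysis.Analysis"
begin

definition xlnx :: "real \<Rightarrow> real" where
  "xlnx t = (if t = 0 then 0 else t * ln t)"

definition Hent :: "real \<Rightarrow> real" where
  "Hent t = - xlnx t - xlnx (1 - t)"

definition erf :: "real \<Rightarrow> real" where
  "erf x = 2 / sqrt pi * integral {0..x} (\<lambda>t. exp (- (t ^ 2)))"

definition Phi :: "real \<Rightarrow> real" where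
  "Phi u = integral {..u} (\<lambda>t. exp (- (t ^ 2) / 2) / sqrt (2 * pi))"

definition lam :: "real \<Rightarrow> real" where
  "lam u = u ^ 2 / 2 + ln (2 * Phi u)"

definition fi :: "(real \<Rightarrow> real) \<Rightarrow> real \<Rightarrow> nat \<Rightarrow> nat \<Rightarrow> real" where
  "fi f \<delta> r i = f (\<delta> + (real i - 1) * (1 - \<delta>) / real r)"

definition psi_com :: "real \<Rightarrow> nat \<Rightarrow> (nat \<Rightarrow> real) \<Rightarrow> real" where
  "psi_com \<delta> r h =
     (1 - \<delta>) / real r * (\<Sum>i=1..r. Hent (h i / (1 - \<delta>)))
     + (real r * (\<Sum>i=1..r. h i) - \<delta>) * ln 2"

definition c1 :: "(real \<Rightarrow> real) \<Rightarrow> real \<Rightarrow> real" where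
  "c1 f \<delta> = integral {0..\<delta>} (\<lambda>u. (f u) ^ 2)"

definition c0bar :: "(real \<Rightarrow> real) \<Rightarrow> real \<Rightarrow> nat \<Rightarrow> (nat \<Rightarrow> real) \<Rightarrow> real" where
  "c0bar f \<delta> r h = (1 / real r) * (\<Sum>i=1..r. fi f \<delta> r i * h i)"

text \<open>c0bar * lambda0bar^*(y), understood as sup over s of
  (c0bar s y - (1/r) sum_i h_i lam(s f_i)); taken in the extended reals since the
  supremum may be +infinity.\<close>
definition c0_lam0star :: "(real \<Rightarrow> real) \<Rightarrow> real \<Rightarrow> nat \<Rightarrow> (nat \<Rightarrow> real) \<Rightarrow> real \<Rightarrow> ereal" where
  "c0_lam0star f \<delta> r h y =
     (SUP s\<in>(UNIV::real set). ereal (c0bar f \<delta> r h * s * y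
        - (1 / real r) * (\<Sum>i=1..r. h i * lam (s * fi f \<delta> r i))))"

definition psi_int :: "(real \<Rightarrow> real) \<Rightarrow> real \<Rightarrow> nat \<Rightarrow> (nat \<Rightarrow> real) \<Rightarrow> real \<Rightarrow> ereal" where
  "psi_int f \<delta> r h y =
     ereal (- (real r * (\<Sum>i=1..r. h i) - \<delta>) * ln 2)
     - (ereal ((c0bar f \<delta> r h) ^ 2 / (2 * c1 f \<delta>) * y ^ 2) + c0_lam0star f \<delta> r h y)"

definition c2bar :: "(real \<Rightarrow> real) \<Rightarrow> real \<Rightarrow> nat \<Rightarrow> (nat \<Rightarrow> real) \<Rightarrow> real" where
  "c2bar f \<delta> r h = integral {0..\<delta>} (\<lambda>u. (f u) ^ 2)
     + (1 / real r) * (\<Sum>i=1..r. (fi f \<delta> r i) ^ 2 * h i)"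

definition G0bar :: "(real \<Rightarrow> real) \<Rightarrow> real \<Rightarrow> nat \<Rightarrow> (nat \<Rightarrow> real) \<Rightarrow> real \<Rightarrow> real" where
  "G0bar f \<delta> r h x = integral {\<delta>..1} (\<lambda>u. ln (erf (x * f u)))
     - (1 / real r) * (\<Sum>i=1..r. h i * ln (erf (x * fi f \<delta> r i)))"

definition psi_ext :: "(real \<Rightarrow> real) \<Rightarrow> real \<Rightarrow> nat \<Rightarrow> (nat \<Rightarrow> real) \<Rightarrow> real \<Rightarrow> real" where
  "psi_ext f \<delta> r h x = - (c2bar f \<delta> r h * x ^ 2 - G0bar f \<delta> r h x)"

text \<open>The box [0,1-delta]^r; a point h is a function on indices, only h 1..h r matter.\<close>
definition box_r :: "real \<Rightarrow> nat \<Rightarrow> (nat \<Rightarrow> real) set" where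
  "box_r \<delta> r = {h. \<forall>i\<in>{1..r}. 0 \<le> h i \<and> h i \<le> 1 - \<delta>}"

definition concave_on_fun :: "(nat \<Rightarrow> real) set \<Rightarrow> ((nat \<Rightarrow> real) \<Rightarrow> real) \<Rightarrow> bool" where
  "concave_on_fun S g \<longleftrightarrow> (\<forall>h\<in>S. \<forall>h'\<in>S. \<forall>t\<in>{0..1::real}.
      t * g h + (1 - t) * g h' \<le> g (\<lambda>i. t * h i + (1 - t) * h' i))"

text \<open>Concavity for functions with values in [-infinity, +infinity) (hypograph convex).\<close>
definition concave_on_efun :: "(nat \<Rightarrow> real) set \<Rightarrow> ((nat \<Rightarrow> real) \<Rightarrow> ereal) \<Rightarrow> bool" where
  "concave_on_efun S g \<longleftrightarrow> (\<forall>h\<in>S. \<forall>h'\<in>S. \<forall>t\<in>{0<..<1::real}.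
      ereal t * g h + ereal (1 - t) * g h' \<le> g (\<lambda>i. t * h i + (1 - t) * h' i))"

end

theory Submission
  imports Defs
begin

text \<open>
  The binary entropy is concave because \<open>t log t\<close> is convex, so \<open>\<psi>\<^sub>c\<^sub>o\<^sub>m\<close> is a nonnegative
  multiple of a sum of concave functions of the single coordinates \<open>h\<^sub>i\<close>, plus an affine function.
  \<open>\<psi>\<^sub>e\<^sub>x\<^sub>t\<close> is affine in \<open>h\<close>. In \<open>\<psi>\<^sub>i\<^sub>n\<^sub>t\<close>, \<open>c\<^sub>0\<close> is linear in \<open>h\<close>, so \<open>c\<^sub>0\<^sup>2 y\<^sup>2 / (2 c\<^sub>1)\<close> is convex
  (\<open>c\<^sub>1 \<ge> 0\<close>), and \<open>c\<^sub>0 \<lambda>\<^sub>0\<^sup>*(y)\<close> is a supremum of functions affine in \<open>h\<close>, hence convex. That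
  supremum may be \<open>+\<infinity>\<close>, where \<open>\<psi>\<^sub>i\<^sub>n\<^sub>t = -\<infinity>\<close>; such points impose no constraint on concavity.
\<close>

lemma sum_convex_comb:
  fixes a b :: "'i \<Rightarrow> 'a::comm_ring_1"
  shows "(\<Sum>i\<in>A. t * a i + (1 - t) * b i) = t * sum a A + (1 - t) * sum b A"
  by (simp only: sum.distrib sum_distrib_left)

lemma sum_mult_convex_comb:
  fixes a b c :: "'i \<Rightarrow> 'a::comm_ring_1"
  shows "(\<Sum>i\<in>A. c i * (t * a i + (1 - t) * b i)) = t * (\<Sum>i\<in>A. c i * a i) + (1 - t) * (\<Sum>i\<in>A. c i * b i)"
  unfolding sum_convex_comb[symmetric] by (intro sum.cong) (simp_all add: algebra_simps)

lemma sum_convex_comb_mult: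
  fixes a b c :: "'i \<Rightarrow> 'a::comm_ring_1"
  shows "(\<Sum>i\<in>A. (t * a i + (1 - t) * b i) * c i) = t * (\<Sum>i\<in>A. a i * c i) + (1 - t) * (\<Sum>i\<in>A. b i * c i)"
  unfolding sum_convex_comb[symmetric] by (intro sum.cong) (simp_all add: algebra_simps)

lemma convex_on_xlnx: "convex_on {0..} xlnx"
proof (rule convex_on_linorderI)
  fix t x y :: real
  assume t: "0 < t" "t < 1" and xy: "x \<in> {0..}" "y \<in> {0..}" "x < y"
  then have "0 < y" by simp
  show "xlnx ((1 - t) *\<^sub>R x + t *\<^sub>R y) \<le> (1 - t) * xlnx x + t * xlnx y"
  proof (cases "x = 0")
    case True
    have "xlnx (t * y) = t * xlnx y + t * y * ln t"
      using t \<open>0 < y\<close> by (simp add: xlnx_def ln_mult algebra_simps)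
    moreover have "t * y * ln t \<le> 0"
      using t \<open>0 < y\<close> by (simp add: mult_nonneg_nonpos)
    ultimately show ?thesis
      using True by (simp add: xlnx_def)
  next
    case False
    with xy have "0 < x" by simp
    have "convex_on {0<..} (\<lambda>x::real. x * ln x)"
      by (intro f''_ge0_imp_convex derivative_eq_intros | simp)+
    then have "((1 - t) * x + t * y) * ln ((1 - t) * x + t * y) \<le> (1 - t) * (x * ln x) + t * (y * ln y)"
      using convex_onD[of "{0<..}" _ t x y] t \<open>0 < x\<close> \<open>0 < y\<close> by simp
    moreover have "0 < (1 - t) * x + t * y"
      using t \<open>0 < x\<close> \<open>0 < y\<close> by (simp add: add_pos_pos)
    ultimately show ?thesis
      using \<open>0 < x\<close> \<open>0 < y\<close> by (simp add: xlnx_def)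
  qed
qed simp

lemma concave_on_Hent: "concave_on {0..1} Hent"
proof -
  have "convex_on {0..1} xlnx"
    by (rule convex_on_subset[OF convex_on_xlnx]) auto
  moreover have "convex_on {0..1} (\<lambda>t. xlnx (1 - t))"
  proof (rule convex_onI)
    fix u a b :: real
    assume "0 < u" "u < 1" "a \<in> {0..1}" "b \<in> {0..1}"
    then have "xlnx ((1 - u) *\<^sub>R (1 - a) + u *\<^sub>R (1 - b)) \<le> (1 - u) * xlnx (1 - a) + u * xlnx (1 - b)"
      by (intro convex_onD[OF convex_on_xlnx]) auto
    then show "xlnx (1 - ((1 - u) *\<^sub>R a + u *\<^sub>R b)) \<le> (1 - u) * xlnx (1 - a) + u * xlnx (1 - b)"
      by (simp add: algebra_simps)
  qed simp
  ultimately have "convex_on {0..1} (\<lambda>t. xlnx t + xlnx (1 - t))"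
    by (rule convex_on_add)
  moreover have "(\<lambda>t. - Hent t) = (\<lambda>t. xlnx t + xlnx (1 - t))"
    by (simp add: Hent_def fun_eq_iff)
  ultimately show ?thesis
    unfolding concave_on_def by (simp only:)
qed

lemma concave_on_rescale:
  fixes g :: "real \<Rightarrow> real"
  assumes "concave_on {0..1} g" and "0 < c"
  shows "concave_on {0..c} (\<lambda>v. g (v / c))"
  unfolding concave_on_iff
proof (intro conjI ballI allI impI)
  fix x y u v :: real
  assume "x \<in> {0..c}" "y \<in> {0..c}" "0 \<le> u" "0 \<le> v" "u + v = 1"
  with assms have "(1 - v) * g (x / c) + v * g (y / c) \<le> g ((1 - v) *\<^sub>R (x / c) + v *\<^sub>R (y / c))"
    by (intro concave_onD[OF assms(1)]) auto
  moreover have "u = 1 - v"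
    using \<open>u + v = 1\<close> by simp
  ultimately show "u * g (x / c) + v * g (y / c) \<le> g ((u *\<^sub>R x + v *\<^sub>R y) / c)"
    by (simp add: add_divide_distrib)
qed simp

lemma concave_on_fun_add:
  assumes "concave_on_fun S g" and "concave_on_fun S g'"
  shows "concave_on_fun S (\<lambda>h. g h + g' h)"
  using assms unfolding concave_on_fun_def
  by (smt (verit, best) distrib_left)

lemma concave_on_fun_cmul:
  assumes "0 \<le> c" and "concave_on_fun S g"
  shows "concave_on_fun S (\<lambda>h. c * g h)"
  using assms unfolding concave_on_fun_def
  by (smt (verit, best) mult.left_commute mult_left_mono distrib_left)

lemma concave_on_fun_affine:
  assumes "\<And>h h' t. h \<in> S \<Longrightarrow> h' \<in> S \<Longrightarrow> t \<in> {0..1} \<Longrightarrow>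
      g (\<lambda>i. t * h i + (1 - t) * h' i) = t * g h + (1 - t) * g h'"
  shows "concave_on_fun S g"
  using assms unfolding concave_on_fun_def by simp

lemma concave_on_fun_sum_coordinates:
  assumes "concave_on I \<phi>" and "\<And>h i. h \<in> S \<Longrightarrow> i \<in> A \<Longrightarrow> h i \<in> I"
  shows "concave_on_fun S (\<lambda>h. \<Sum>i\<in>A. \<phi> (h i))"
  unfolding concave_on_fun_def
proof (intro ballI)
  fix h h' t assume "h \<in> S" "h' \<in> S" "t \<in> {0..1::real}"
  then have "t * \<phi> (h i) + (1 - t) * \<phi> (h' i) \<le> \<phi> (t * h i + (1 - t) * h' i)" if "i \<in> A" for i
    using concave_onD[OF assms(1), of t "h' i" "h i"] assms(2) that by (simp add: algebra_simps)
  then show "t * (\<Sum>i\<in>A. \<phi> (h i)) + (1 - t) * (\<Sum>i\<in>A. \<phi> (h' i)) \<le> (\<Sum>i\<in>A. \<phi> (t * h i + (1 - t) * h' i))"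
    by (simp add: sum_convex_comb[symmetric] sum_mono)
qed

lemma concave_on_fun_psi_com:
  assumes "\<delta> < 1"
  shows "concave_on_fun (box_r \<delta> r) (\<lambda>h. psi_com \<delta> r h)"
proof -
  have "concave_on {0..1 - \<delta>} (\<lambda>v. Hent (v / (1 - \<delta>)))"
    using assms by (intro concave_on_rescale concave_on_Hent) simp
  then have "concave_on_fun (box_r \<delta> r) (\<lambda>h. \<Sum>i=1..r. Hent (h i / (1 - \<delta>)))"
    by (rule concave_on_fun_sum_coordinates) (simp add: box_r_def)
  then have "concave_on_fun (box_r \<delta> r) (\<lambda>h. (1 - \<delta>) / real r * (\<Sum>i=1..r. Hent (h i / (1 - \<delta>))))"
    using assms by (intro concave_on_fun_cmul) simp_all
  moreover have "concave_on_fun (box_r \<delta> r) (\<lambda>h. (real r * (\<Sum>i=1..r. h i) - \<delta>) * ln 2)"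
    by (rule concave_on_fun_affine) (simp only: sum_convex_comb, simp add: algebra_simps)
  ultimately show ?thesis
    unfolding psi_com_def by (rule concave_on_fun_add)
qed

lemma c0bar_convex_comb:
  "c0bar f \<delta> r (\<lambda>i. t * h i + (1 - t) * h' i) = t * c0bar f \<delta> r h + (1 - t) * c0bar f \<delta> r h'"
  unfolding c0bar_def sum_mult_convex_comb by (simp add: algebra_simps diff_divide_distrib)

lemma psi_ext_convex_comb:
  "psi_ext f \<delta> r (\<lambda>i. t * h i + (1 - t) * h' i) x = t * psi_ext f \<delta> r h x + (1 - t) * psi_ext f \<delta> r h' x"
  unfolding psi_ext_def c2bar_def G0bar_def sum_mult_convex_comb sum_convex_comb_mult
  by (simp add: algebra_simps diff_divide_distrib)

lemma concave_on_fun_psi_ext: "concave_on_fun S (\<lambda>h. psi_ext f \<delta> r h x)"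
  by (rule concave_on_fun_affine) (rule psi_ext_convex_comb)

lemma concave_on_efunI_finite:
  assumes "\<And>h. h \<in> S \<Longrightarrow> g h \<noteq> \<infinity>"
    and "\<And>h h' t a b. h \<in> S \<Longrightarrow> h' \<in> S \<Longrightarrow> 0 < t \<Longrightarrow> t < 1 \<Longrightarrow>
      g h = ereal a \<Longrightarrow> g h' = ereal b \<Longrightarrow> ereal (t * a + (1 - t) * b) \<le> g (\<lambda>i. t * h i + (1 - t) * h' i)"
  shows "concave_on_efun S g"
  unfolding concave_on_efun_def
proof (intro ballI)
  fix h h' t assume h: "h \<in> S" and h': "h' \<in> S" and t: "t \<in> {0<..<1::real}"
  consider (finite) a b where "g h = ereal a" "g h' = ereal b" | (MInf) "g h = -\<infinity> \<or> g h' = -\<infinity>"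
    using assms(1)[OF h] assms(1)[OF h'] by (cases "g h"; cases "g h'") auto
  then show "ereal t * g h + ereal (1 - t) * g h' \<le> g (\<lambda>i. t * h i + (1 - t) * h' i)"
  proof cases
    case finite
    then show ?thesis
      using assms(2)[OF h h' _ _ finite] t by simp
  next
    case MInf
    then have "ereal t * g h + ereal (1 - t) * g h' = -\<infinity>"
      using t assms(1)[OF h] assms(1)[OF h'] by (cases "g h"; cases "g h'") auto
    then show ?thesis
      by (simp only:) simp
  qed
qed

lemma c1_nonneg: "0 \<le> c1 f \<delta>"
  unfolding c1_def
  by (cases "(\<lambda>u. (f u)\<^sup>2) integrable_on {0..\<delta>}") (simp_all add: integral_nonneg not_integrable_integral)

lemma c0bar_square_term_convex_comb_le:
  assumes "t \<in> {0..1}"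
  shows "(c0bar f \<delta> r (\<lambda>i. t * h i + (1 - t) * h' i))\<^sup>2 / (2 * c1 f \<delta>) * y\<^sup>2
    \<le> t * ((c0bar f \<delta> r h)\<^sup>2 / (2 * c1 f \<delta>) * y\<^sup>2) + (1 - t) * ((c0bar f \<delta> r h')\<^sup>2 / (2 * c1 f \<delta>) * y\<^sup>2)"
proof -
  define k where "k = y\<^sup>2 / (2 * c1 f \<delta>)"
  have k: "(c0bar f \<delta> r g)\<^sup>2 / (2 * c1 f \<delta>) * y\<^sup>2 = k * (c0bar f \<delta> r g)\<^sup>2" for g
    by (simp add: k_def)
  have "0 \<le> k"
    using c1_nonneg by (simp add: k_def)
  have "(c0bar f \<delta> r (\<lambda>i. t * h i + (1 - t) * h' i))\<^sup>2 \<le> t * (c0bar f \<delta> r h)\<^sup>2 + (1 - t) * (c0bar f \<delta> r h')\<^sup>2"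
    using convex_onD[OF convex_power2, of "1 - t" "c0bar f \<delta> r h" "c0bar f \<delta> r h'"] assms
    by (simp add: c0bar_convex_comb)
  then have "k * (c0bar f \<delta> r (\<lambda>i. t * h i + (1 - t) * h' i))\<^sup>2
      \<le> k * (t * (c0bar f \<delta> r h)\<^sup>2 + (1 - t) * (c0bar f \<delta> r h')\<^sup>2)"
    using \<open>0 \<le> k\<close> by (rule mult_left_mono)
  then show ?thesis
    unfolding k by (simp add: algebra_simps)
qed

lemma c0_lam0star_gt_MInf: "-\<infinity> < c0_lam0star f \<delta> r h y"
proof -
  have "ereal (c0bar f \<delta> r h * 0 * y - 1 / real r * (\<Sum>i=1..r. h i * lam (0 * fi f \<delta> r i)))
      \<le> c0_lam0star f \<delta> r h y"
    unfolding c0_lam0star_def by (rule SUP_upper) simp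
  then show ?thesis
    by (rule order.strict_trans2[rotated]) simp
qed

lemma c0_lam0star_convex_comb_le:
  assumes "c0_lam0star f \<delta> r h y = ereal a" and "c0_lam0star f \<delta> r h' y = ereal b"
    and "t \<in> {0..1}"
  shows "c0_lam0star f \<delta> r (\<lambda>i. t * h i + (1 - t) * h' i) y \<le> ereal (t * a + (1 - t) * b)"
proof -
  define dual where "dual g s = c0bar f \<delta> r g * s * y - 1 / real r * (\<Sum>i=1..r. g i * lam (s * fi f \<delta> r i))"
    for g s
  have sup: "c0_lam0star f \<delta> r g y = (SUP s. ereal (dual g s))" for g
    unfolding c0_lam0star_def dual_def ..
  have mix: "dual (\<lambda>i. t * h i + (1 - t) * h' i) s = t * dual h s + (1 - t) * dual h' s" for s
    unfolding dual_def c0bar_convex_comb sum_convex_comb_mult by (simp add: algebra_simps diff_divide_distrib)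
  have dual_le: "ereal (dual g s) \<le> c0_lam0star f \<delta> r g y" for g s
    unfolding sup by (rule SUP_upper) simp
  have "dual (\<lambda>i. t * h i + (1 - t) * h' i) s \<le> t * a + (1 - t) * b" for s
  proof -
    have "dual h s \<le> a" "dual h' s \<le> b"
      using dual_le[of h s] dual_le[of h' s] assms(1,2) by simp_all
    then show ?thesis
      unfolding mix using assms(3) by (intro add_mono mult_left_mono) auto
  qed
  then show ?thesis
    unfolding sup by (intro SUP_least) simp
qed

lemma concave_on_efun_psi_int: "concave_on_efun S (\<lambda>h. psi_int f \<delta> r h y)"
proof -
  define a where "a g = - (real r * (\<Sum>i=1..r. g i) - \<delta>) * ln 2" for g
  define q where "q g = (c0bar f \<delta> r g)\<^sup>2 / (2 * c1 f \<delta>) * y\<^sup>2" for g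
  have psi: "psi_int f \<delta> r g y = ereal (a g) - (ereal (q g) + c0_lam0star f \<delta> r g y)" for g
    by (simp add: psi_int_def a_def q_def)
  have finite: "\<exists>\<sigma>. c0_lam0star f \<delta> r g y = ereal \<sigma> \<and> b = a g - (q g + \<sigma>)"
    if "psi_int f \<delta> r g y = ereal b" for g b
    using that c0_lam0star_gt_MInf[of f \<delta> r g y] unfolding psi
    by (cases "c0_lam0star f \<delta> r g y") auto
  show ?thesis
  proof (rule concave_on_efunI_finite)
    fix h
    show "psi_int f \<delta> r h y \<noteq> \<infinity>"
      using c0_lam0star_gt_MInf[of f \<delta> r h y] unfolding psi
      by (cases "c0_lam0star f \<delta> r h y") auto
  next
    fix h h' and t b b' :: real
    assume t: "0 < t" "t < 1"
      and "psi_int f \<delta> r h y = ereal b" "psi_int f \<delta> r h' y = ereal b'"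
    then obtain \<sigma> \<sigma>' where \<sigma>: "c0_lam0star f \<delta> r h y = ereal \<sigma>" "b = a h - (q h + \<sigma>)"
      and \<sigma>': "c0_lam0star f \<delta> r h' y = ereal \<sigma>'" "b' = a h' - (q h' + \<sigma>')"
      using finite by meson
    define m where "m = (\<lambda>i. t * h i + (1 - t) * h' i)"
    have "c0_lam0star f \<delta> r m y \<le> ereal (t * \<sigma> + (1 - t) * \<sigma>')"
      unfolding m_def using \<sigma>(1) \<sigma>'(1) t by (intro c0_lam0star_convex_comb_le) auto
    with c0_lam0star_gt_MInf[of f \<delta> r m y] obtain \<sigma>m
      where \<sigma>m: "c0_lam0star f \<delta> r m y = ereal \<sigma>m" "\<sigma>m \<le> t * \<sigma> + (1 - t) * \<sigma>'"
      by (cases "c0_lam0star f \<delta> r m y") auto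
    have "a m = t * a h + (1 - t) * a h'"
      unfolding a_def m_def sum_convex_comb by (simp add: algebra_simps)
    moreover have "q m \<le> t * q h + (1 - t) * q h'"
      unfolding q_def m_def using t by (intro c0bar_square_term_convex_comb_le) simp
    moreover have "t * b + (1 - t) * b' = t * a h + (1 - t) * a h' - (t * q h + (1 - t) * q h')
        - (t * \<sigma> + (1 - t) * \<sigma>')"
      unfolding \<sigma>(2) \<sigma>'(2) by (simp add: algebra_simps)
    ultimately have "t * b + (1 - t) * b' \<le> a m - (q m + \<sigma>m)"
      using \<sigma>m(2) by linarith
    then show "ereal (t * b + (1 - t) * b') \<le> psi_int f \<delta> r (\<lambda>i. t * h i + (1 - t) * h' i) y"
      unfolding m_def[symmetric] psi \<sigma>m(1) by simp
  qed
qed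

theorem lemma4:
  fixes f :: "real \<Rightarrow> real" and \<delta> x y :: real and r :: nat
  assumes "continuous_on {0..1} f"
    and "mono_on {0..1} f"
    and "\<forall>u\<in>{0..1}. 0 \<le> f u"
    and "\<forall>u\<in>{0<..1}. 0 < f u"
    and "0 < \<delta>" and "\<delta> < 1"
    and "0 < r"
    and "0 < x"
  shows "concave_on_fun (box_r \<delta> r) (\<lambda>h. psi_com \<delta> r h)
    \<and> concave_on_efun (box_r \<delta> r) (\<lambda>h. psi_int f \<delta> r h y)
    \<and> concave_on_fun (box_r \<delta> r) (\<lambda>h. psi_ext f \<delta> r h x)"
  \<comment> \<open>Of the hypotheses only \<open>\<delta> < 1\<close> is needed: the other conditions on \<open>f\<close>, \<open>\<delta>\<close>, \<open>r\<close>, \<open>x\<close>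
    only make the quantities meaningful, while concavity in \<open>h\<close> holds regardless.\<close>
  using concave_on_fun_psi_com[OF \<open>\<delta> < 1\<close>] concave_on_efun_psi_int concave_on_fun_psi_ext
  by blast

end
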